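(* Consider the heteroscedastic linear model $y(i,k)=\tau_i+\mu+\mathbf g^T(k)\beta+\varepsilon(i,k)$ with treatments $i\in\{1,\ldots,v_1\}$, covariate indices $k\in\{1,\ldots,d\}$, known regressors $\mathbf g(k)\in\mathbb R^{v_2}$, uncorrelated mean-zero errors with $\mathrm{Var}(\varepsilon(i,k))=\sigma^2/\lambda_i$, $\lambda_i>0$ known. Let $\Phi$ be an eigenvalue-based information function and let $\xi^*=w^*\otimes\alpha^*$ be a product design that is $\Phi$-optimal for $\mathbf A^T\theta$. Let $\xi$ be a design satisfying $\mathbf M(\xi)\mathbf G\mathbf A=\mathbf A$, where $$\mathbf G=\mathrm{diag}\Big(\mathbf M_1^{-1}(w^* ),\ \big(\textstyle\sum_i\lambda_iw_i^*\big)^{-1}\mathbf M_2^-(\alpha^* )\Big)$$ and $\mathbf M_2^-(\alpha^* )$ is any generalized inverse of $\mathbf M_2(\alpha^* )$. Then $\xi$ is $\Phi$-optimal for $\mathbf A^T\theta$. In particular, let $\mathbf S^-(\alpha^* )$ be a generalized inverse of $\mathbf S(\alpha^* )$ and let $\xi$ be a design with marginal treatment design $w$ satisfying (a) $w_i=w_i^*$ for $i=1,\ldots,v_1$; (b) $\Big[\frac{1}{w_1^*}\sum_{k=1}^d\xi(1,k)\mathbf g(k),\ldots,\frac{1}{w_{v_1}^*}\sum_{k=1}^d\xi(v_1,k)\mathbf g(k)\Big]\mathbf Q_1=\mathbf 0_{v_2\times s_1}$; (c) the $v_1\times v_2$ matrix whose $i$th row is $\sum_k(\xi(i,k)-w_i^*\alpha_k^*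 )\mathbf g^T(k)$, multiplied on the right by $\mathbf S^-(\alpha^* )\mathbf K$, equals $\mathbf 0_{v_1\times s_2}$; (d) $\big(\sum_{i=1}^{v_1}\lambda_iw_i^*\big)^{-1}\Big(\sum_{i,k}\lambda_i\xi(i,k)\mathbf g(k)\mathbf g^T(k)-\big(\sum_{i,k}\lambda_i\xi(i,k)\mathbf g(k)\big)\sum_{k=1}^{d}\alpha_k^*\mathbf g^T(k)\Big)\mathbf S^-(\alpha^* )\mathbf K=\mathbf K$. Then $\xi$ is $\Phi$-optimal for $\mathbf A^T\theta$.
   Context: Write $\theta=(\tau^T,\mu,\beta^T)^T$, $\mathbf h(k)=(1,\mathbf g^T(k))^T$, $\mathbf f(i,k)=(\mathbf e_i^T,1,\mathbf g^T(k))^T$. A design $\xi$ is a nonnegative function on $\{1,\ldots,v_1\}\times\{1,\ldots,d\}$ summing to one, with moment matrix $\mathbf M(\xi)=\sum_{i,k}\xi(i,k)\lambda_i\mathbf f(i,k)\mathbf f^T(i,k)$; its marginal treatment design is $w_i=\sum_k\xi(i,k)$ and marginal covariate design $\alpha_k=\sum_i\xi(i,k)$. A product design is $(w\otimes\alpha)(i,k)=w_i\alpha_k$ for probability vectors $w\in\mathbb R^{v_1}$, $\alpha\in\mathbb R^d$. Let $\mathbf Q_1\in\mathbb R^{v_1\times s_1}$ have full column rank, satisfy $\mathbf Q_1^T\mathbf 1_{v_1}=\mathbf 0$ and have no zero row; let $\mathbf K\in\mathbb R^{v_2\times s_2}$ have full column rank; $\mathbf Q_2=(\mathbf 0_{s_2},\mathbf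 K^T)^T$, $\mathbf A=\mathrm{diag}(\mathbf Q_1,\mathbf Q_2)$. A design is feasible for $\mathbf A^T\theta$ if $\mathcal C(\mathbf A)\subseteq\mathcal C(\mathbf M(\xi))$, with information matrix $\mathbf N_{\mathbf A}(\xi)=(\mathbf A^T\mathbf M^-(\xi)\mathbf A)^{-1}$; it is $\Phi$-optimal if feasible and maximizing $\Phi(\mathbf N_{\mathbf A}(\xi))$ over feasible designs. Notation: $\mathbf M_1(w)=\mathrm{diag}(\lambda_1w_1,\ldots,\lambda_{v_1}w_{v_1})$; $\mathbf M_2(\alpha)=\sum_k\alpha_k\mathbf h(k)\mathbf h^T(k)$; $\mathbf S(\alpha)=\sum_k\alpha_k\mathbf g(k)\mathbf g^T(k)-(\sum_k\alpha_k\mathbf g(k))(\sum_k\alpha_k\mathbf g(k))^T$. An information function is a positively homogeneous, concave, nonnegative, nonconstant, upper semicontinuous function on nonnegative definite $(s_1+s_2)\times(s_1+s_2)$ matrices; it is eigenvalue-based if it depends only on the eigenvalues of its argument. *)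

theory Defs
  imports "HOL-Analysis.Analysis" "HOL-Computational_Algebra.Polynomial"
begin

text \<open>Treatments are indexed by a finite type 't (v1 = CARD('t)), covariate
indices by a finite type 'k (d = CARD('k)), regressors live in real^'v (v2 = CARD('v)).
The parameter vector theta = (tau, mu, beta) is indexed by 't + (unit + 'v).\<close>

definition outer :: "real^'n \<Rightarrow> real^'m \<Rightarrow> real^'m^'n" where
  "outer x y = (\<chi> i j. x$i * y$j)"

definition blockdiag :: "real^'b^'a \<Rightarrow> real^'d^'c \<Rightarrow> real^('b + 'd)^('a + 'c)" where
  "blockdiag X Y = (\<chi> r s. case (r, s) of
       (Inl i, Inl j) \<Rightarrow> X$i$j
     | (Inr i, Inr j) \<Rightarrow> Y$i$j
     | _ \<Rightarrow> 0)"

definition gen_inverse :: "real^'n^'m \<Rightarrow> real^'m^'n \<Rightarrow> bool" where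
  "gen_inverse X Y \<longleftrightarrow> X ** Y ** X = X"

definition full_col_rank :: "real^'c^'r \<Rightarrow> bool" where
  "full_col_rank X \<longleftrightarrow> rank X = CARD('c)"

definition is_design :: "('t::finite \<Rightarrow> 'k::finite \<Rightarrow> real) \<Rightarrow> bool" where
  "is_design \<xi> \<longleftrightarrow> (\<forall>i k. 0 \<le> \<xi> i k) \<and> (\<Sum>i\<in>UNIV. \<Sum>k\<in>UNIV. \<xi> i k) = 1"

definition prob_vec :: "('a::finite \<Rightarrow> real) \<Rightarrow> bool" where
  "prob_vec w \<longleftrightarrow> (\<forall>i. 0 \<le> w i) \<and> (\<Sum>i\<in>UNIV. w i) = 1"

definition product_design :: "('t \<Rightarrow> real) \<Rightarrow> ('k \<Rightarrow> real) \<Rightarrow> ('t \<Rightarrow> 'k \<Rightarrow> real)" where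
  "product_design w \<alpha> = (\<lambda>i k. w i * \<alpha> k)"

definition hvec :: "('k \<Rightarrow> real^'v::finite) \<Rightarrow> 'k \<Rightarrow> real^(unit + 'v)" where
  "hvec g k = (\<chi> j. case j of Inl _ \<Rightarrow> 1 | Inr l \<Rightarrow> g k $ l)"

definition fvec :: "('k \<Rightarrow> real^'v::finite) \<Rightarrow> 't::finite \<Rightarrow> 'k \<Rightarrow> real^('t + (unit + 'v))" where
  "fvec g i k = (\<chi> j. case j of Inl i' \<Rightarrow> (if i' = i then 1 else 0)
                             | Inr (Inl _) \<Rightarrow> 1
                             | Inr (Inr l) \<Rightarrow> g k $ l)"

definition moment :: "('t::finite \<Rightarrow> real) \<Rightarrow> ('k::finite \<Rightarrow> real^'v) \<Rightarrow> ('t \<Rightarrow> 'k \<Rightarrow> real)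
    \<Rightarrow> real^('t + (unit + 'v))^('t + (unit + 'v))" where
  "moment lam g \<xi> = (\<Sum>i\<in>UNIV. \<Sum>k\<in>UNIV. (\<xi> i k * lam i) *\<^sub>R outer (fvec g i k) (fvec g i k))"

definition M1 :: "('t::finite \<Rightarrow> real) \<Rightarrow> ('t \<Rightarrow> real) \<Rightarrow> real^'t^'t" where
  "M1 lam w = (\<chi> i j. if i = j then lam i * w i else 0)"

definition M2 :: "('k::finite \<Rightarrow> real^'v) \<Rightarrow> ('k \<Rightarrow> real) \<Rightarrow> real^(unit + 'v)^(unit + 'v)" where
  "M2 g \<alpha> = (\<Sum>k\<in>UNIV. \<alpha> k *\<^sub>R outer (hvec g k) (hvec g k))"

definition Smat :: "('k::finite \<Rightarrow> real^'v) \<Rightarrow> ('k \<Rightarrow> real) \<Rightarrow> real^'v^'v" where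
  "Smat g \<alpha> = (\<Sum>k\<in>UNIV. \<alpha> k *\<^sub>R outer (g k) (g k))
               - outer (\<Sum>k\<in>UNIV. \<alpha> k *\<^sub>R g k) (\<Sum>k\<in>UNIV. \<alpha> k *\<^sub>R g k)"

definition Q2mat :: "real^'b^'v \<Rightarrow> real^'b^(unit + 'v)" where
  "Q2mat K = (\<chi> r c. case r of Inl _ \<Rightarrow> 0 | Inr l \<Rightarrow> K$l$c)"

definition Amat :: "real^'a^'t \<Rightarrow> real^'b^'v \<Rightarrow> real^('a + 'b)^('t + (unit + 'v))" where
  "Amat Q1 K = blockdiag Q1 (Q2mat K)"

definition feasible :: "('t::finite \<Rightarrow> real) \<Rightarrow> ('k::finite \<Rightarrow> real^'v::finite) \<Rightarrow>
    real^'s^('t + (unit + 'v)) \<Rightarrow> ('t \<Rightarrow> 'k \<Rightarrow> real) \<Rightarrow> bool" where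
  "feasible lam g A \<xi> \<longleftrightarrow> is_design \<xi> \<and> range ((*v) A) \<subseteq> range ((*v) (moment lam g \<xi>))"

text \<open>Information matrix N_A(xi) = (A^T M^-(xi) A)^{-1}, for some generalized inverse
M^-(xi) (independent of the choice for feasible designs).\<close>
definition info_matrix :: "('t::finite \<Rightarrow> real) \<Rightarrow> ('k::finite \<Rightarrow> real^'v::finite) \<Rightarrow>
    real^'s::finite^('t + (unit + 'v)) \<Rightarrow> ('t \<Rightarrow> 'k \<Rightarrow> real) \<Rightarrow> real^'s^'s" where
  "info_matrix lam g A \<xi> =
     matrix_inv (transpose A ** (SOME G. gen_inverse (moment lam g \<xi>) G) ** A)"

definition phi_optimal :: "(real^'s^'s \<Rightarrow> real) \<Rightarrow> ('t::finite \<Rightarrow> real) \<Rightarrow>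
    ('k::finite \<Rightarrow> real^'v::finite) \<Rightarrow> real^'s::finite^('t + (unit + 'v)) \<Rightarrow>
    ('t \<Rightarrow> 'k \<Rightarrow> real) \<Rightarrow> bool" where
  "phi_optimal \<Phi> lam g A \<xi> \<longleftrightarrow> feasible lam g A \<xi> \<and>
     (\<forall>\<eta>. feasible lam g A \<eta> \<longrightarrow> \<Phi> (info_matrix lam g A \<eta>) \<le> \<Phi> (info_matrix lam g A \<xi>))"

definition nnd :: "real^'n^'n \<Rightarrow> bool" where
  "nnd C \<longleftrightarrow> transpose C = C \<and> (\<forall>x. 0 \<le> x \<bullet> (C *v x))"

definition information_function :: "(real^'n^'n \<Rightarrow> real) \<Rightarrow> bool" where
  "information_function \<Phi> \<longleftrightarrow>
     (\<forall>C \<delta>. nnd C \<and> 0 < \<delta> \<longrightarrow> \<Phi> (\<delta> *\<^sub>R C) = \<delta> * \<Phi> C) \<and>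
     (\<forall>C D a. nnd C \<and> nnd D \<and> 0 \<le> a \<and> a \<le> 1 \<longrightarrow>
        (1 - a) * \<Phi> C + a * \<Phi> D \<le> \<Phi> ((1 - a) *\<^sub>R C + a *\<^sub>R D)) \<and>
     (\<forall>C. nnd C \<longrightarrow> 0 \<le> \<Phi> C) \<and>
     (\<exists>C D. nnd C \<and> nnd D \<and> \<Phi> C \<noteq> \<Phi> D) \<and>
     (\<forall>a. closed {C. nnd C \<and> a \<le> \<Phi> C})"

text \<open>Characteristic polynomial det(X I - C); its roots (with multiplicity) are the eigenvalues.\<close>
definition charpoly :: "real^'n^'n \<Rightarrow> real poly" where
  "charpoly C = det (\<chi> i j. (if i = j then [:0, 1:] else 0) - [:C$i$j:])"

definition eigenvalue_based :: "(real^'n^'n \<Rightarrow> real) \<Rightarrow> bool" where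
  "eigenvalue_based \<Phi> \<longleftrightarrow>
     (\<forall>C D. nnd C \<and> nnd D \<and> charpoly C = charpoly D \<longrightarrow> \<Phi> C = \<Phi> D)"

end

theory Submission
  imports Defs
begin

(*
  Write \<xi>0 = w0 \<otimes> \<alpha>0 for the optimal product design. If one matrix H solves both
  M(\<xi>0) H = A and M(\<xi>) H = A, then \<xi> is feasible and, since
  A^T M^- A = H^T M M^- M H = H^T A for every generalized inverse M^-, the designs \<xi> and \<xi>0
  have the same information matrix.

  Feasibility of \<xi>0 forces w0 > 0 (as Q1 has no zero row) and C(Q2) \<subseteq> C(M2(\<alpha>0)).
  A block computation then shows that H = diag(M1(w0)^-1 Q1, V / c), with
  c = \<Sum>i \<lambda>i w0i, solves M(\<xi>0) H = A whenever M2(\<alpha>0) V = Q2. The first claim takes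
  V = M2^-(\<alpha>0) Q2, which gives H = G A. The second takes V = [-gbar^T; I] S^-(\<alpha>0) K with
  gbar = \<Sum>k \<alpha>0k g(k): since S(\<alpha>0) is the Schur complement of the (1,1) entry of
  M2(\<alpha>0), this V satisfies M2(\<alpha>0) V = Q2, and conditions (a)-(d) are exactly the four
  blocks of M(\<xi>) H = A.
*)

lemma sum_UNIV_Plus:
  fixes f :: "'a::finite + 'b::finite \<Rightarrow> 'c::comm_monoid_add"
  shows "(\<Sum>x\<in>UNIV. f x) = (\<Sum>a\<in>UNIV. f (Inl a)) + (\<Sum>b\<in>UNIV. f (Inr b))"
  using sum.Plus[of "UNIV::'a set" "UNIV::'b set" f] by (simp add: comp_def)

lemma matrix_mult_nth_column: "(A ** B) $ i $ j = (A *v column j B) $ i"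
  by (simp add: matrix_matrix_mult_def matrix_vector_mult_def column_def)

lemma column_scaleR: "column b (c *\<^sub>R X) = c *\<^sub>R column b X"
  by (simp add: column_def vec_eq_iff)

lemma column_sum_eq_0:
  assumes "transpose Q *v 1 = 0"
  shows "(\<Sum>i\<in>UNIV. Q $ i $ j) = 0"
  using arg_cong[OF assms, of "\<lambda>v. v $ j"] by (simp add: matrix_vector_mult_def transpose_def)

lemma range_matrix_mult_subset: "range ((*v) (X ** H)) \<subseteq> range ((*v) X)"
  unfolding image_subset_iff by (metis matrix_vector_mul_assoc rangeI)

lemma outer_mult_vec: "outer x y *v z = (y \<bullet> z) *\<^sub>R x"
  unfolding vec_eq_iff
  by (auto simp: outer_def matrix_vector_mult_def inner_vec_def sum_distrib_right intro!: sum.cong)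

lemma sum_matrix_mult_vec: "(\<Sum>j\<in>J. A j) *v x = (\<Sum>j\<in>J. A j *v x)"
  by (induction J rule: infinite_finite_induct) (simp_all add: matrix_vector_mult_add_rdistrib)

lemma diag_mult_nth: "((\<chi> i j. if i = j then d i else 0) ** X) $ i $ j = d i * X $ i $ j"
  by (simp add: matrix_matrix_mult_def if_distrib[of "\<lambda>x. x * _"] cong: if_cong)

lemma matrix_inv_eqI:
  fixes A :: "real^'n::finite^'m::finite"
  assumes "A ** B = mat 1" and "B ** A = mat 1"
  shows "matrix_inv A = B"
proof -
  have "\<exists>A'. A ** A' = mat 1 \<and> A' ** A = mat 1"
    using assms by blast
  then have inv: "A ** matrix_inv A = mat 1 \<and> matrix_inv A ** A = mat 1"
    unfolding matrix_inv_def by (rule someI_ex)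
  have "matrix_inv A = matrix_inv A ** (A ** B)" using assms by simp
  also have "\<dots> = B" using inv by (simp add: matrix_mul_assoc)
  finally show ?thesis .
qed

lemma blockdiag_nth [simp]:
  "blockdiag X Y $ Inl i $ Inl j = X $ i $ j" "blockdiag X Y $ Inr i' $ Inr j' = Y $ i' $ j'"
  "blockdiag X Y $ Inl i $ Inr j' = 0" "blockdiag X Y $ Inr i' $ Inl j = 0"
  by (simp_all add: blockdiag_def)

lemma blockdiag_mult: "blockdiag X Y ** blockdiag X' Y' = blockdiag (X ** X') (Y ** Y')"
  unfolding vec_eq_iff
proof (intro allI)
  fix r s
  show "(blockdiag X Y ** blockdiag X' Y') $ r $ s = blockdiag (X ** X') (Y ** Y') $ r $ s"
    by (cases r; cases s) (simp_all add: matrix_matrix_mult_def sum_UNIV_Plus)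
qed

lemma gen_inverse_exists: "\<exists>G. gen_inverse X G"
  for X :: "real^'n::finite^'m::finite"
proof -
  obtain h where h: "linear h" "\<forall>v\<in>range ((*v) X). X *v h v = v"
    using linear_exists_right_inverse_on[OF matrix_vector_mul_linear subspace_UNIV] by blast
  have "(X ** matrix h ** X) *v x = X *v x" for x
    using h by (simp add: matrix_vector_mul_assoc[symmetric] matrix_works)
  then show ?thesis unfolding gen_inverse_def by (metis matrix_eq)
qed

lemma gen_inverse_mult_cancel:
  assumes "gen_inverse X G" and "range ((*v) B) \<subseteq> range ((*v) X)"
  shows "X ** G ** B = B"
proof -
  have "(X ** G ** B) *v x = B *v x" for x
  proof -
    obtain z where z: "B *v x = X *v z" using assms(2) by blast
    have "(X ** G ** B) *v x = (X ** G ** X) *v z"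
      by (simp add: z matrix_vector_mul_assoc[symmetric])
    then show ?thesis using assms(1) z by (simp add: gen_inverse_def)
  qed
  then show ?thesis by (simp add: matrix_eq)
qed

subsection \<open>Information matrices\<close>

lemma moment_symmetric: "transpose (moment lam g \<xi>) = moment lam g \<xi>"
  unfolding vec_eq_iff by (simp add: moment_def outer_def transpose_def mult.commute)

lemma info_matrix_eq:
  assumes "moment lam g \<xi> ** H = A"
  shows "info_matrix lam g A \<xi> = matrix_inv (transpose H ** A)"
proof -
  let ?M = "moment lam g \<xi>"
  define G where "G = (SOME G. gen_inverse ?M G)"
  have MGM: "?M ** G ** ?M = ?M"
    using someI_ex[OF gen_inverse_exists[of ?M]] unfolding G_def gen_inverse_def .
  have "transpose A ** G ** A = transpose H ** (?M ** G ** ?M) ** H"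
    by (simp add: assms[symmetric] matrix_transpose_mul moment_symmetric matrix_mul_assoc)
  also have "\<dots> = transpose H ** A"
    by (simp add: MGM assms[symmetric] matrix_mul_assoc)
  finally show ?thesis unfolding info_matrix_def G_def by simp
qed

lemma phi_optimal_transfer:
  assumes "phi_optimal \<Phi> lam g A \<xi>'" and "moment lam g \<xi>' ** H = A"
    and "is_design \<xi>" and "moment lam g \<xi> ** H = A"
  shows "phi_optimal \<Phi> lam g A \<xi>"
proof -
  have "feasible lam g A \<xi>"
    using assms(3,4) range_matrix_mult_subset[of "moment lam g \<xi>" H] by (simp add: feasible_def)
  moreover have "info_matrix lam g A \<xi> = info_matrix lam g A \<xi>'"
    using info_matrix_eq[OF assms(2)] info_matrix_eq[OF assms(4)] by simp
  ultimately show ?thesis using assms(1) by (simp add: phi_optimal_def)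
qed

subsection \<open>Block structure of the moment matrices\<close>

definition vec_inr :: "'a^('b::finite + 'c::finite) \<Rightarrow> 'a^'c" where
  "vec_inr y = (\<chi> p. y $ Inr p)"

lemma vec_inr_nth [simp]: "vec_inr y $ p = y $ Inr p"
  by (simp add: vec_inr_def)

lemma fvec_nth [simp]:
  "fvec g i k $ Inl i' = of_bool (i' = i)"
  "fvec g i k $ Inr p = hvec g k $ p"
  by (simp_all add: fvec_def hvec_def split: sum.split)

lemma hvec_nth [simp]:
  "hvec g k $ Inl u = 1"
  "hvec g k $ Inr l = g k $ l"
  by (simp_all add: hvec_def)

lemma Q2mat_nth [simp]:
  "Q2mat K $ Inl u $ b = 0" "Q2mat K $ Inr l $ b = K $ l $ b"
  by (simp_all add: Q2mat_def)

lemma inner_fvec: "fvec g i k \<bullet> y = y $ Inl i + hvec g k \<bullet> vec_inr y"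
  by (simp add: inner_vec_def sum_UNIV_Plus)

lemma inner_hvec: "hvec g k \<bullet> z = z $ Inl () + g k \<bullet> vec_inr z"
  by (simp add: inner_vec_def sum_UNIV_Plus UNIV_unit)

lemma moment_mult_vec:
  "moment lam g \<xi> *v y = (\<Sum>i\<in>UNIV. \<Sum>k\<in>UNIV. (\<xi> i k * lam i * (fvec g i k \<bullet> y)) *\<^sub>R fvec g i k)"
  by (simp only: moment_def sum_matrix_mult_vec scaleR_matrix_vector_assoc[symmetric] outer_mult_vec
      scaleR_scaleR)

lemma moment_mult_vec_Inl:
  "(moment lam g \<xi> *v y) $ Inl i = (\<Sum>k\<in>UNIV. \<xi> i k * lam i * (fvec g i k \<bullet> y))"
proof -
  have "(moment lam g \<xi> *v y) $ Inl i
      = (\<Sum>i'\<in>UNIV. (\<Sum>k\<in>UNIV. \<xi> i' k * lam i' * (fvec g i' k \<bullet> y)) * of_bool (i = i'))"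
    by (simp add: moment_mult_vec sum_distrib_right)
  also have "\<dots> = (\<Sum>k\<in>UNIV. \<xi> i k * lam i * (fvec g i k \<bullet> y))"
    by (simp add: Int_def)
  finally show ?thesis .
qed

lemma moment_mult_vec_Inr:
  "(moment lam g \<xi> *v y) $ Inr p = (\<Sum>i\<in>UNIV. \<Sum>k\<in>UNIV. \<xi> i k * lam i * (fvec g i k \<bullet> y) * hvec g k $ p)"
  by (simp add: moment_mult_vec)

lemma column_blockdiag:
  "column (Inl j) (blockdiag B Y) $ Inl i = B $ i $ j"
  "vec_inr (column (Inl j) (blockdiag B Y)) = 0"
  "column (Inr b) (blockdiag B Y) $ Inl i = 0"
  "vec_inr (column (Inr b) (blockdiag B Y)) = column b Y"
  by (simp_all add: column_def vec_eq_iff)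

lemma moment_mult_blockdiag_nth:
  "(moment lam g \<xi> ** blockdiag B Y) $ Inl i $ Inl j = lam i * (\<Sum>k\<in>UNIV. \<xi> i k) * B $ i $ j"
  "(moment lam g \<xi> ** blockdiag B Y) $ Inr p $ Inl j
     = (\<Sum>i\<in>UNIV. lam i * (\<Sum>k\<in>UNIV. \<xi> i k * hvec g k $ p) * B $ i $ j)"
  "(moment lam g \<xi> ** blockdiag B Y) $ Inl i $ Inr b
     = lam i * (\<Sum>k\<in>UNIV. \<xi> i k * (hvec g k \<bullet> column b Y))"
  "(moment lam g \<xi> ** blockdiag B Y) $ Inr p $ Inr b
     = (\<Sum>i\<in>UNIV. lam i * (\<Sum>k\<in>UNIV. \<xi> i k * hvec g k $ p * (hvec g k \<bullet> column b Y)))"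
  by (simp_all add: matrix_mult_nth_column moment_mult_vec_Inl moment_mult_vec_Inr inner_fvec
      column_blockdiag sum_distrib_left sum_distrib_right mult_ac)

lemma moment_mult_blockdiag_eq_Amat:
  assumes LL: "\<And>i j. lam i * (\<Sum>k\<in>UNIV. \<xi> i k) * B $ i $ j = Q1 $ i $ j"
    and RL: "\<And>p j. (\<Sum>i\<in>UNIV. lam i * (\<Sum>k\<in>UNIV. \<xi> i k * hvec g k $ p) * B $ i $ j) = 0"
    and LR: "\<And>i b. (\<Sum>k\<in>UNIV. \<xi> i k * (hvec g k \<bullet> column b Y)) = 0"
    and RR: "\<And>l b. (\<Sum>i\<in>UNIV. lam i * (\<Sum>k\<in>UNIV. \<xi> i k * g k $ l * (hvec g k \<bullet> column b Y)))
                   = K $ l $ b"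
  shows "moment lam g \<xi> ** blockdiag B Y = Amat Q1 K"
  unfolding vec_eq_iff
proof (intro allI)
  fix r s
  show "(moment lam g \<xi> ** blockdiag B Y) $ r $ s = Amat Q1 K $ r $ s"
    by (cases r; cases s)
      (auto simp: Amat_def Q2mat_def moment_mult_blockdiag_nth LL RL LR RR split: sum.split)
qed

lemma M1_inv_mult_nth:
  assumes "\<And>i. lam i * w i \<noteq> 0"
  shows "(matrix_inv (M1 lam w) ** X) $ i $ j = X $ i $ j / (lam i * w i)"
proof -
  define D :: "real^'a^'a" where "D = (\<chi> i j. if i = j then 1 / (lam i * w i) else 0)"
  have "M1 lam w ** D = mat 1" "D ** M1 lam w = mat 1"
    using assms by (simp_all add: vec_eq_iff M1_def D_def diag_mult_nth mat_def)
  then have "matrix_inv (M1 lam w) = D" by (rule matrix_inv_eqI)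
  then show ?thesis by (simp add: D_def diag_mult_nth)
qed

lemma M2_mult_vec:
  "M2 g \<alpha> *v z = (\<Sum>k\<in>UNIV. (\<alpha> k * (hvec g k \<bullet> z)) *\<^sub>R hvec g k)"
  by (simp only: M2_def sum_matrix_mult_vec scaleR_matrix_vector_assoc[symmetric] outer_mult_vec
      scaleR_scaleR)

lemma M2_nth: "M2 g \<alpha> $ p $ q = (\<Sum>k\<in>UNIV. \<alpha> k * hvec g k $ p * hvec g k $ q)"
  by (simp add: M2_def outer_def mult.assoc)

lemma M2_mult_nth: "(M2 g \<alpha> ** Y) $ p $ b = (\<Sum>k\<in>UNIV. \<alpha> k * hvec g k $ p * (hvec g k \<bullet> column b Y))"
  by (simp add: matrix_mult_nth_column M2_mult_vec mult_ac)

lemma Amat_mult_vec_nth: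
  "(Amat Q1 K *v x) $ Inl i = (\<Sum>a\<in>UNIV. Q1 $ i $ a * x $ Inl a)"
  "(Amat Q1 K *v x) $ Inr p = (Q2mat K *v vec_inr x) $ p"
  by (simp_all add: Amat_def matrix_vector_mult_def sum_UNIV_Plus)

lemma Q2mat_mult_vec_nth:
  "(Q2mat K *v x) $ Inl u = 0" "(Q2mat K *v x) $ Inr l = (K *v x) $ l"
  by (simp_all add: matrix_vector_mult_def)

subsection \<open>Product designs\<close>

lemma product_moment_mult_vec_Inl:
  assumes "prob_vec \<alpha>"
  shows "(moment lam g (product_design w \<alpha>) *v y) $ Inl i
           = lam i * w i * (y $ Inl i + (M2 g \<alpha> *v vec_inr y) $ Inl ())"
proof -
  have "(moment lam g (product_design w \<alpha>) *v y) $ Inl i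
      = lam i * w i * (y $ Inl i * (\<Sum>k\<in>UNIV. \<alpha> k) + (\<Sum>k\<in>UNIV. \<alpha> k * (hvec g k \<bullet> vec_inr y)))"
    by (simp add: moment_mult_vec_Inl product_design_def inner_fvec sum.distrib
        sum_distrib_left sum_distrib_right algebra_simps)
  then show ?thesis
    using assms by (simp add: prob_vec_def M2_mult_vec)
qed

lemma product_moment_mult_vec_Inr:
  "(moment lam g (product_design w \<alpha>) *v y) $ Inr p
     = (\<Sum>i\<in>UNIV. lam i * w i * y $ Inl i) * M2 g \<alpha> $ p $ Inl ()
       + (\<Sum>i\<in>UNIV. lam i * w i) * (M2 g \<alpha> *v vec_inr y) $ p"
  by (simp add: moment_mult_vec_Inr product_design_def inner_fvec M2_nth M2_mult_vec sum_product
      sum.distrib algebra_simps) (rule sum.swap)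

lemma feasible_product_design_weight_nonzero:
  fixes Q1 :: "real^'a::finite^'t::finite" and K :: "real^'b::finite^'v::finite"
  assumes feas: "feasible lam g (Amat Q1 K) (product_design w \<alpha>)"
    and \<alpha>: "prob_vec \<alpha>" and Q1_row: "row i Q1 \<noteq> 0"
  shows "w i \<noteq> 0"
proof
  assume w0: "w i = 0"
  define x :: "real^('a + 'b)" where "x = (\<chi> t. case t of Inl a \<Rightarrow> Q1 $ i $ a | Inr _ \<Rightarrow> 0)"
  obtain y where y: "moment lam g (product_design w \<alpha>) *v y = Amat Q1 K *v x"
    using feas unfolding feasible_def by (metis rangeI image_iff subsetD)
  have "row i Q1 \<bullet> row i Q1 = (Amat Q1 K *v x) $ Inl i"
    by (simp add: Amat_mult_vec_nth x_def inner_vec_def row_def)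
  also have "\<dots> = (moment lam g (product_design w \<alpha>) *v y) $ Inl i"
    by (simp add: y)
  also have "\<dots> = 0"
    by (simp add: product_moment_mult_vec_Inl[OF \<alpha>] w0)
  finally show False using Q1_row by simp
qed

lemma optimal_product_design_weight_pos:
  assumes opt: "phi_optimal \<Phi> lam g (Amat Q1 K) (product_design w \<alpha>)"
    and w: "prob_vec w" and \<alpha>: "prob_vec \<alpha>" and Q1_row: "row i Q1 \<noteq> 0"
  shows "0 < w i"
proof -
  have "feasible lam g (Amat Q1 K) (product_design w \<alpha>)"
    using opt by (simp add: phi_optimal_def)
  then have "w i \<noteq> 0" by (rule feasible_product_design_weight_nonzero[OF _ \<alpha> Q1_row])
  moreover have "0 \<le> w i" using w by (simp add: prob_vec_def)
  ultimately show ?thesis by simp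
qed

lemma feasible_product_design_Q2_range:
  fixes Q1 :: "real^'a::finite^'t::finite" and K :: "real^'b::finite^'v::finite"
  assumes feas: "feasible lam g (Amat Q1 K) (product_design w \<alpha>)" and \<alpha>: "prob_vec \<alpha>"
  shows "range ((*v) (Q2mat K)) \<subseteq> range ((*v) (M2 g \<alpha>))"
proof (rule subsetI, elim rangeE)
  fix x v assume v: "v = Q2mat K *v x"
  define x' :: "real^('a + 'b)" where "x' = (\<chi> t. case t of Inl _ \<Rightarrow> 0 | Inr b \<Rightarrow> x $ b)"
  obtain y where y: "moment lam g (product_design w \<alpha>) *v y = Amat Q1 K *v x'"
    using feas unfolding feasible_def by (metis rangeI image_iff subsetD)
  define c where "c = (\<Sum>i\<in>UNIV. lam i * w i)"
  define m where "m = (M2 g \<alpha> *v vec_inr y) $ Inl ()"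
  have "lam i * w i * y $ Inl i = - (lam i * w i * m)" for i
    using product_moment_mult_vec_Inl[OF \<alpha>, of lam g w y i]
    by (simp add: y Amat_mult_vec_nth x'_def m_def algebra_simps)
  then have weighted: "(\<Sum>i\<in>UNIV. lam i * w i * y $ Inl i) = - c * m"
    by (simp add: c_def sum_negf sum_distrib_right)
  \<comment> \<open>The rows Inl i eliminate the treatment coordinates of y from the rows Inr p.\<close>
  have "(M2 g \<alpha> *v (c *\<^sub>R (vec_inr y - m *\<^sub>R axis (Inl ()) 1))) $ p = (Q2mat K *v x) $ p" for p
  proof -
    have "(Q2mat K *v x) $ p = (moment lam g (product_design w \<alpha>) *v y) $ Inr p"
      by (simp add: y Amat_mult_vec_nth x'_def vec_inr_def)
    also have "\<dots> = (\<Sum>i\<in>UNIV. lam i * w i * y $ Inl i) * M2 g \<alpha> $ p $ Inl ()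
        + c * (M2 g \<alpha> *v vec_inr y) $ p"
      by (simp add: product_moment_mult_vec_Inr c_def)
    also have "\<dots> = c * ((M2 g \<alpha> *v vec_inr y) $ p - m * M2 g \<alpha> $ p $ Inl ())"
      using weighted by (simp add: algebra_simps)
    finally show ?thesis
      by (simp add: matrix_vector_mult_scaleR matrix_vector_mult_diff_distrib
          matrix_vector_mult_basis column_def)
  qed
  then show "v \<in> range ((*v) (M2 g \<alpha>))"
    unfolding v by (metis rangeI vec_eq_iff)
qed

lemma product_moment_mult_blockdiag:
  fixes Q1 :: "real^'a::finite^'t::finite" and K :: "real^'b::finite^'v::finite"
  assumes lw_pos: "\<And>i. 0 < lam i * w i" and \<alpha>: "prob_vec \<alpha>"
    and Q1_contrast: "transpose Q1 *v 1 = 0" and V: "M2 g \<alpha> ** V = Q2mat K"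
  shows "moment lam g (product_design w \<alpha>)
           ** blockdiag (matrix_inv (M1 lam w) ** Q1) (inverse (\<Sum>i\<in>UNIV. lam i * w i) *\<^sub>R V)
         = Amat Q1 K"
proof (rule moment_mult_blockdiag_eq_Amat)
  let ?B = "matrix_inv (M1 lam w) ** Q1" and ?c = "\<Sum>i\<in>UNIV. lam i * w i"
  have lw: "lam i * w i \<noteq> 0" for i using lw_pos[of i] by linarith
  have sum_\<alpha>: "(\<Sum>k\<in>UNIV. \<alpha> k) = 1" using \<alpha> by (simp add: prob_vec_def)
  have c_pos: "0 < ?c" by (rule sum_pos) (simp_all add: lw_pos)
  have weighted_B: "lam i * w i * ?B $ i $ j = Q1 $ i $ j" for i j
    using lw[of i] by (simp add: M1_inv_mult_nth[OF lw])
  have "M2 g \<alpha> ** (inverse ?c *\<^sub>R V) = inverse ?c *\<^sub>R Q2mat K"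
    by (simp only: matrix_scalar_ac scalar_matrix_assoc[symmetric] V)
  then have M2V: "(\<Sum>k\<in>UNIV. \<alpha> k * hvec g k $ p * (hvec g k \<bullet> column b (inverse ?c *\<^sub>R V)))
      = inverse ?c * Q2mat K $ p $ b" for p b
    unfolding M2_mult_nth[symmetric] by simp
  fix i j p b l
  show "lam i * (\<Sum>k\<in>UNIV. product_design w \<alpha> i k) * ?B $ i $ j = Q1 $ i $ j"
    by (simp add: product_design_def sum_distrib_left[symmetric] sum_\<alpha> weighted_B)
  have "(\<Sum>i\<in>UNIV. lam i * (\<Sum>k\<in>UNIV. product_design w \<alpha> i k * hvec g k $ p) * ?B $ i $ j)
      = (\<Sum>k\<in>UNIV. \<alpha> k * hvec g k $ p) * (\<Sum>i\<in>UNIV. lam i * w i * ?B $ i $ j)"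
    by (simp add: product_design_def sum_distrib_left sum_distrib_right mult_ac)
  then show "(\<Sum>i\<in>UNIV. lam i * (\<Sum>k\<in>UNIV. product_design w \<alpha> i k * hvec g k $ p) * ?B $ i $ j) = 0"
    by (simp add: weighted_B column_sum_eq_0[OF Q1_contrast])
  show "(\<Sum>k\<in>UNIV. product_design w \<alpha> i k * (hvec g k \<bullet> column b (inverse ?c *\<^sub>R V))) = 0"
    using M2V[of "Inl ()" b] by (simp add: product_design_def mult.assoc flip: sum_distrib_left)
  have "(\<Sum>i\<in>UNIV. lam i * (\<Sum>k\<in>UNIV. product_design w \<alpha> i k * g k $ l
          * (hvec g k \<bullet> column b (inverse ?c *\<^sub>R V))))
      = ?c * (\<Sum>k\<in>UNIV. \<alpha> k * hvec g k $ Inr l * (hvec g k \<bullet> column b (inverse ?c *\<^sub>R V)))"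
    by (simp add: product_design_def sum_distrib_left sum_distrib_right mult_ac) (rule sum.swap)
  then show "(\<Sum>i\<in>UNIV. lam i * (\<Sum>k\<in>UNIV. product_design w \<alpha> i k * g k $ l
          * (hvec g k \<bullet> column b (inverse ?c *\<^sub>R V)))) = K $ l $ b"
    using c_pos by (simp only: M2V) simp
qed

lemma phi_optimal_of_blockdiag_solution:
  fixes Q1 :: "real^'a::finite^'t::finite" and K :: "real^'b::finite^'v::finite"
  assumes lam_pos: "\<forall>i. 0 < lam i"
    and Q1_contrast: "transpose Q1 *v (1 :: real^'t) = 0"
    and Q1_nozero: "\<forall>i. row i Q1 \<noteq> 0"
    and w_prob: "prob_vec w" and \<alpha>_prob: "prob_vec \<alpha>"
    and opt: "phi_optimal \<Phi> lam g (Amat Q1 K) (product_design w \<alpha>)"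
    and V: "M2 g \<alpha> ** V = Q2mat K"
    and des: "is_design \<xi>"
    and H: "moment lam g \<xi> ** blockdiag (matrix_inv (M1 lam w) ** Q1)
              (inverse (\<Sum>i\<in>UNIV. lam i * w i) *\<^sub>R V) = Amat Q1 K"
  shows "phi_optimal \<Phi> lam g (Amat Q1 K) \<xi>"
proof -
  have "0 < lam i * w i" for i
    using lam_pos optimal_product_design_weight_pos[OF opt w_prob \<alpha>_prob] Q1_nozero by simp
  then have "moment lam g (product_design w \<alpha>) ** blockdiag (matrix_inv (M1 lam w) ** Q1)
      (inverse (\<Sum>i\<in>UNIV. lam i * w i) *\<^sub>R V) = Amat Q1 K"
    by (rule product_moment_mult_blockdiag[OF _ \<alpha>_prob Q1_contrast V])
  then show ?thesis by (rule phi_optimal_transfer[OF opt _ des H])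
qed

lemma phi_optimal_of_moment_G_condition:
  fixes Q1 :: "real^'a::finite^'t::finite" and K :: "real^'b::finite^'v::finite"
  assumes lam_pos: "\<forall>i. 0 < lam i"
    and Q1_contrast: "transpose Q1 *v (1 :: real^'t) = 0"
    and Q1_nozero: "\<forall>i. row i Q1 \<noteq> 0"
    and w_prob: "prob_vec w" and \<alpha>_prob: "prob_vec \<alpha>"
    and opt: "phi_optimal \<Phi> lam g (Amat Q1 K) (product_design w \<alpha>)"
    and M2g: "gen_inverse (M2 g \<alpha>) M2g" and des: "is_design \<xi>"
    and H: "moment lam g \<xi> ** blockdiag (matrix_inv (M1 lam w))
              (inverse (\<Sum>i\<in>UNIV. lam i * w i) *\<^sub>R M2g) ** Amat Q1 K = Amat Q1 K"
  shows "phi_optimal \<Phi> lam g (Amat Q1 K) \<xi>"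
proof (rule phi_optimal_of_blockdiag_solution[OF lam_pos Q1_contrast Q1_nozero w_prob \<alpha>_prob opt _ des])
  have "feasible lam g (Amat Q1 K) (product_design w \<alpha>)"
    using opt by (simp add: phi_optimal_def)
  then show "M2 g \<alpha> ** (M2g ** Q2mat K) = Q2mat K"
    using gen_inverse_mult_cancel[OF M2g feasible_product_design_Q2_range] \<alpha>_prob
    by (simp add: matrix_mul_assoc)
  show "moment lam g \<xi> ** blockdiag (matrix_inv (M1 lam w) ** Q1)
      (inverse (\<Sum>i\<in>UNIV. lam i * w i) *\<^sub>R (M2g ** Q2mat K)) = Amat Q1 K"
    using H by (simp only: Amat_def scalar_matrix_assoc blockdiag_mult[symmetric] matrix_mul_assoc)
qed

subsection \<open>The Schur complement of the covariate moment matrix\<close>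

definition mean_regressor :: "('k::finite \<Rightarrow> real^'v) \<Rightarrow> ('k \<Rightarrow> real) \<Rightarrow> real^'v" where
  "mean_regressor g \<alpha> = (\<Sum>k\<in>UNIV. \<alpha> k *\<^sub>R g k)"

(* Since \<Sum>k \<alpha> k = 1, M2 g \<alpha> = [[1, gbar^T], [gbar, \<Sum>k \<alpha> k g(k) g(k)^T]] with gbar the mean
   regressor, and Smat g \<alpha> is the Schur complement of its (1,1) entry: hence
   M2 g \<alpha> [-gbar^T; I] = [0; Smat g \<alpha>], and schur_lift g \<alpha> U = [-gbar^T U; U]. *)
definition schur_lift :: "('k::finite \<Rightarrow> real^'v::finite) \<Rightarrow> ('k \<Rightarrow> real) \<Rightarrow> real^'b::finite^'v
    \<Rightarrow> real^'b^(unit + 'v)" where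
  "schur_lift g \<alpha> U = (\<chi> p b. case p of Inl _ \<Rightarrow> - (mean_regressor g \<alpha> \<bullet> column b U) | Inr l \<Rightarrow> U $ l $ b)"

lemma inner_mean_regressor: "mean_regressor g \<alpha> \<bullet> z = (\<Sum>k\<in>UNIV. \<alpha> k * (g k \<bullet> z))"
  by (simp add: mean_regressor_def inner_sum_left)

lemma Smat_mult_vec: "Smat g \<alpha> *v z = (\<Sum>k\<in>UNIV. (\<alpha> k * ((g k - mean_regressor g \<alpha>) \<bullet> z)) *\<^sub>R g k)"
proof -
  have "Smat g \<alpha> *v z = (\<Sum>k\<in>UNIV. (\<alpha> k * (g k \<bullet> z)) *\<^sub>R g k)
      - (mean_regressor g \<alpha> \<bullet> z) *\<^sub>R mean_regressor g \<alpha>"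
    by (simp only: Smat_def mean_regressor_def[symmetric] matrix_vector_mult_diff_rdistrib
        sum_matrix_mult_vec scaleR_matrix_vector_assoc[symmetric] outer_mult_vec scaleR_scaleR)
  also have "\<dots> = (\<Sum>k\<in>UNIV. (\<alpha> k * ((g k - mean_regressor g \<alpha>) \<bullet> z)) *\<^sub>R g k)"
    by (simp add: inner_diff_left right_diff_distrib scaleR_left_diff_distrib sum_subtractf
        mean_regressor_def scaleR_sum_right mult.commute)
  finally show ?thesis .
qed

lemma Smat_solution_of_M2_solution:
  assumes \<alpha>: "prob_vec \<alpha>" and z: "M2 g \<alpha> *v z = Q2mat K *v x"
  shows "Smat g \<alpha> *v vec_inr z = K *v x"
proof -
  have sum_\<alpha>: "(\<Sum>k\<in>UNIV. \<alpha> k) = 1" using \<alpha> by (simp add: prob_vec_def)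
  have M2z: "(M2 g \<alpha> *v z) $ p = (\<Sum>k\<in>UNIV. \<alpha> k * (z $ Inl () + g k \<bullet> vec_inr z) * hvec g k $ p)" for p
    by (simp add: M2_mult_vec inner_hvec)
  have "(M2 g \<alpha> *v z) $ Inl () = (\<Sum>k\<in>UNIV. \<alpha> k) * z $ Inl () + mean_regressor g \<alpha> \<bullet> vec_inr z"
    by (simp add: M2z inner_mean_regressor distrib_left sum.distrib sum_distrib_right)
  then have z0: "z $ Inl () = - (mean_regressor g \<alpha> \<bullet> vec_inr z)"
    by (simp add: z Q2mat_mult_vec_nth sum_\<alpha>)
  have "(Smat g \<alpha> *v vec_inr z) $ l = (M2 g \<alpha> *v z) $ Inr l" for l
    by (simp add: Smat_mult_vec M2z z0 inner_diff_left algebra_simps)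
  then show ?thesis by (simp add: vec_eq_iff z Q2mat_mult_vec_nth)
qed

lemma feasible_product_design_K_range:
  fixes Q1 :: "real^'a::finite^'t::finite" and K :: "real^'b::finite^'v::finite"
  assumes feas: "feasible lam g (Amat Q1 K) (product_design w \<alpha>)" and \<alpha>: "prob_vec \<alpha>"
  shows "range ((*v) K) \<subseteq> range ((*v) (Smat g \<alpha>))"
proof (rule subsetI, elim rangeE)
  fix x v assume v: "v = K *v x"
  obtain z where "M2 g \<alpha> *v z = Q2mat K *v x"
    using feasible_product_design_Q2_range[OF feas \<alpha>] by (metis rangeI image_iff subsetD)
  then have "Smat g \<alpha> *v vec_inr z = v" unfolding v by (rule Smat_solution_of_M2_solution[OF \<alpha>])
  then show "v \<in> range ((*v) (Smat g \<alpha>))" by (metis rangeI)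
qed

lemma inner_hvec_schur_lift:
  "hvec g k \<bullet> column b (schur_lift g \<alpha> U) = (g k - mean_regressor g \<alpha>) \<bullet> column b U"
proof -
  have "vec_inr (column b (schur_lift g \<alpha> U)) = column b U"
    by (simp add: vec_eq_iff schur_lift_def column_def)
  then show ?thesis by (simp add: inner_hvec schur_lift_def column_def inner_diff_left)
qed

lemma M2_mult_schur_lift:
  assumes \<alpha>: "prob_vec \<alpha>" and SU: "Smat g \<alpha> ** U = K"
  shows "M2 g \<alpha> ** schur_lift g \<alpha> U = Q2mat K"
  unfolding vec_eq_iff
proof (intro allI)
  fix p b
  have sum_\<alpha>: "(\<Sum>k\<in>UNIV. \<alpha> k) = 1" using \<alpha> by (simp add: prob_vec_def)
  have "(M2 g \<alpha> ** schur_lift g \<alpha> U) $ p $ b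
      = (\<Sum>k\<in>UNIV. \<alpha> k * hvec g k $ p * ((g k - mean_regressor g \<alpha>) \<bullet> column b U))"
    by (simp add: M2_mult_nth inner_hvec_schur_lift)
  also have "\<dots> = Q2mat K $ p $ b"
  proof (cases p)
    case (Inl u)
    have "(\<Sum>k\<in>UNIV. \<alpha> k * ((g k - mean_regressor g \<alpha>) \<bullet> column b U)) = 0"
      by (simp add: inner_diff_left right_diff_distrib sum_subtractf inner_mean_regressor sum_\<alpha>
          flip: sum_distrib_right)
    then show ?thesis by (simp add: Inl)
  next
    case (Inr l)
    have "(Smat g \<alpha> *v column b U) $ l = K $ l $ b"
      using SU by (simp add: matrix_mult_nth_column[symmetric])
    then show ?thesis by (simp add: Inr Smat_mult_vec mult_ac)
  qed
  finally show "(M2 g \<alpha> ** schur_lift g \<alpha> U) $ p $ b = Q2mat K $ p $ b" .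
qed

subsection \<open>Designs with prescribed marginals\<close>

lemma deviation_matrix_mult_nth:
  assumes marg: "(\<Sum>k\<in>UNIV. \<xi> i k) = w i"
  shows "((\<chi> i l. \<Sum>k\<in>UNIV. (\<xi> i k - w i * \<alpha> k) * g k $ l) ** U) $ i $ b
           = (\<Sum>k\<in>UNIV. \<xi> i k * ((g k - mean_regressor g \<alpha>) \<bullet> column b U))"
proof -
  let ?u = "column b U"
  have "((\<chi> i l. \<Sum>k\<in>UNIV. (\<xi> i k - w i * \<alpha> k) * g k $ l) ** U) $ i $ b
      = (\<Sum>k\<in>UNIV. (\<xi> i k - w i * \<alpha> k) * (g k \<bullet> ?u))"
    by (simp add: matrix_matrix_mult_def inner_vec_def column_def sum_distrib_left sum_distrib_right
        mult.assoc) (rule sum.swap)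
  also have "\<dots> = (\<Sum>k\<in>UNIV. \<xi> i k * (g k \<bullet> ?u)) - w i * (mean_regressor g \<alpha> \<bullet> ?u)"
    by (simp add: left_diff_distrib sum_subtractf inner_mean_regressor sum_distrib_left mult.assoc)
  also have "\<dots> = (\<Sum>k\<in>UNIV. \<xi> i k * ((g k - mean_regressor g \<alpha>) \<bullet> ?u))"
    by (simp add: inner_diff_left right_diff_distrib sum_subtractf marg flip: sum_distrib_right)
  finally show ?thesis .
qed

lemma centered_moment_mult_nth:
  "(((\<Sum>i\<in>UNIV. \<Sum>k\<in>UNIV. (lam i * \<xi> i k) *\<^sub>R outer (g k) (g k))
      - outer (\<Sum>i\<in>UNIV. \<Sum>k\<in>UNIV. (lam i * \<xi> i k) *\<^sub>R g k) (mean_regressor g \<alpha>)) ** U) $ l $ b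
   = (\<Sum>i\<in>UNIV. lam i * (\<Sum>k\<in>UNIV. \<xi> i k * g k $ l * ((g k - mean_regressor g \<alpha>) \<bullet> column b U)))"
proof -
  let ?u = "column b U" and ?m = "mean_regressor g \<alpha>"
  have "((\<Sum>i\<in>UNIV. \<Sum>k\<in>UNIV. (lam i * \<xi> i k) *\<^sub>R outer (g k) (g k))
      - outer (\<Sum>i\<in>UNIV. \<Sum>k\<in>UNIV. (lam i * \<xi> i k) *\<^sub>R g k) ?m) *v ?u
      = (\<Sum>i\<in>UNIV. \<Sum>k\<in>UNIV. (lam i * \<xi> i k * (g k \<bullet> ?u)) *\<^sub>R g k)
        - (?m \<bullet> ?u) *\<^sub>R (\<Sum>i\<in>UNIV. \<Sum>k\<in>UNIV. (lam i * \<xi> i k) *\<^sub>R g k)"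
    by (simp only: matrix_vector_mult_diff_rdistrib sum_matrix_mult_vec
        scaleR_matrix_vector_assoc[symmetric] outer_mult_vec scaleR_scaleR)
  then show ?thesis
    by (simp add: matrix_mult_nth_column inner_diff_left right_diff_distrib sum_subtractf
        sum_distrib_left sum_distrib_right mult_ac)
qed

lemma marginal_conditions_moment_mult_blockdiag:
  fixes Q1 :: "real^'a::finite^'t::finite" and K :: "real^'b::finite^'v::finite"
  assumes lam_pos: "\<And>i. 0 < lam i" and w_pos: "\<And>i. 0 < w i"
    and Q1_contrast: "transpose Q1 *v 1 = 0"
    and marg: "\<And>i. (\<Sum>k\<in>UNIV. \<xi> i k) = w i"
    and cb: "(\<chi> l i. (1 / w i) * (\<Sum>k\<in>UNIV. \<xi> i k * g k $ l)) ** Q1 = 0"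
    and cc: "(\<chi> i l. \<Sum>k\<in>UNIV. (\<xi> i k - w i * \<alpha> k) * g k $ l) ** U = 0"
    and cd: "(inverse c *\<^sub>R ((\<Sum>i\<in>UNIV. \<Sum>k\<in>UNIV. (lam i * \<xi> i k) *\<^sub>R outer (g k) (g k))
               - outer (\<Sum>i\<in>UNIV. \<Sum>k\<in>UNIV. (lam i * \<xi> i k) *\<^sub>R g k) (mean_regressor g \<alpha>))) ** U = K"
  shows "moment lam g \<xi> ** blockdiag (matrix_inv (M1 lam w) ** Q1) (inverse c *\<^sub>R schur_lift g \<alpha> U)
         = Amat Q1 K"
proof (rule moment_mult_blockdiag_eq_Amat)
  let ?B = "matrix_inv (M1 lam w) ** Q1"
  have lw: "lam i * w i \<noteq> 0" for i using lam_pos[of i] w_pos[of i] by simp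
  have B: "lam i * s * ?B $ i $ j = s / w i * Q1 $ i $ j" for i j s
    using lam_pos[of i] by (simp add: M1_inv_mult_nth[OF lw])
  have lift: "hvec g k \<bullet> column b (inverse c *\<^sub>R schur_lift g \<alpha> U)
      = inverse c * ((g k - mean_regressor g \<alpha>) \<bullet> column b U)" for k b
    by (simp add: column_scaleR inner_hvec_schur_lift)
  fix i j p b l
  show "lam i * (\<Sum>k\<in>UNIV. \<xi> i k) * ?B $ i $ j = Q1 $ i $ j"
    using w_pos[of i] by (simp add: B marg)
  show "(\<Sum>i\<in>UNIV. lam i * (\<Sum>k\<in>UNIV. \<xi> i k * hvec g k $ p) * ?B $ i $ j) = 0"
  proof (cases p)
    case (Inl u)
    have "w i \<noteq> 0" for i using w_pos[of i] by simp
    with Inl show ?thesis by (simp add: B marg column_sum_eq_0[OF Q1_contrast])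
  next
    case (Inr l)
    have "(\<Sum>i\<in>UNIV. lam i * (\<Sum>k\<in>UNIV. \<xi> i k * hvec g k $ p) * ?B $ i $ j)
        = ((\<chi> l i. (1 / w i) * (\<Sum>k\<in>UNIV. \<xi> i k * g k $ l)) ** Q1) $ l $ j"
      by (simp only: Inr hvec_nth B) (simp add: matrix_matrix_mult_def)
    then show ?thesis using cb by simp
  qed
  have "((\<chi> i l. \<Sum>k\<in>UNIV. (\<xi> i k - w i * \<alpha> k) * g k $ l) ** U) $ i $ b
      = (\<Sum>k\<in>UNIV. \<xi> i k * ((g k - mean_regressor g \<alpha>) \<bullet> column b U))"
    by (rule deviation_matrix_mult_nth) (rule marg)
  then show "(\<Sum>k\<in>UNIV. \<xi> i k * (hvec g k \<bullet> column b (inverse c *\<^sub>R schur_lift g \<alpha> U))) = 0"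
    by (simp add: lift cc mult.left_commute flip: sum_distrib_left)
  show "(\<Sum>i\<in>UNIV. lam i * (\<Sum>k\<in>UNIV. \<xi> i k * g k $ l
          * (hvec g k \<bullet> column b (inverse c *\<^sub>R schur_lift g \<alpha> U)))) = K $ l $ b"
    using arg_cong[OF cd, of "\<lambda>X. X $ l $ b"]
    by (simp add: lift centered_moment_mult_nth scalar_matrix_assoc[symmetric]
        sum_distrib_left mult_ac)
qed

lemma phi_optimal_of_marginal_conditions:
  fixes Q1 :: "real^'a::finite^'t::finite" and K :: "real^'b::finite^'v::finite"
  assumes lam_pos: "\<forall>i. 0 < lam i"
    and Q1_contrast: "transpose Q1 *v (1 :: real^'t) = 0"
    and Q1_nozero: "\<forall>i. row i Q1 \<noteq> 0"
    and w_prob: "prob_vec w" and \<alpha>_prob: "prob_vec \<alpha>"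
    and opt: "phi_optimal \<Phi> lam g (Amat Q1 K) (product_design w \<alpha>)"
    and Sg: "gen_inverse (Smat g \<alpha>) Sg" and des: "is_design \<xi>"
    and marg: "\<forall>i. (\<Sum>k\<in>UNIV. \<xi> i k) = w i"
    and cb: "(\<chi> l i. (1 / w i) * (\<Sum>k\<in>UNIV. \<xi> i k * g k $ l)) ** Q1 = 0"
    and cc: "(\<chi> i l. \<Sum>k\<in>UNIV. (\<xi> i k - w i * \<alpha> k) * g k $ l) ** Sg ** K = 0"
    and cd: "(inverse (\<Sum>i\<in>UNIV. lam i * w i) *\<^sub>R
           ((\<Sum>i\<in>UNIV. \<Sum>k\<in>UNIV. (lam i * \<xi> i k) *\<^sub>R outer (g k) (g k))
            - outer (\<Sum>i\<in>UNIV. \<Sum>k\<in>UNIV. (lam i * \<xi> i k) *\<^sub>R g k)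
                    (\<Sum>k\<in>UNIV. \<alpha> k *\<^sub>R g k))) ** Sg ** K = K"
  shows "phi_optimal \<Phi> lam g (Amat Q1 K) \<xi>"
proof (rule phi_optimal_of_blockdiag_solution[OF lam_pos Q1_contrast Q1_nozero w_prob \<alpha>_prob opt _ des])
  have "feasible lam g (Amat Q1 K) (product_design w \<alpha>)"
    using opt by (simp add: phi_optimal_def)
  then have "Smat g \<alpha> ** (Sg ** K) = K"
    using gen_inverse_mult_cancel[OF Sg feasible_product_design_K_range] \<alpha>_prob
    by (simp add: matrix_mul_assoc)
  then show "M2 g \<alpha> ** schur_lift g \<alpha> (Sg ** K) = Q2mat K"
    by (rule M2_mult_schur_lift[OF \<alpha>_prob])
  show "moment lam g \<xi> ** blockdiag (matrix_inv (M1 lam w) ** Q1)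
      (inverse (\<Sum>i\<in>UNIV. lam i * w i) *\<^sub>R schur_lift g \<alpha> (Sg ** K)) = Amat Q1 K"
    using lam_pos optimal_product_design_weight_pos[OF opt w_prob \<alpha>_prob] Q1_nozero Q1_contrast
      marg cb cc cd
    by (intro marginal_conditions_moment_mult_blockdiag)
      (simp_all add: matrix_mul_assoc mean_regressor_def)
qed

theorem theorem3:
  fixes lam :: "'t::finite \<Rightarrow> real"
    and g :: "'k::finite \<Rightarrow> real^'v::finite"
    and Q1 :: "real^'a::finite^'t"
    and K :: "real^'b::finite^'v"
    and \<Phi> :: "real^('a + 'b)^('a + 'b) \<Rightarrow> real"
    and wst :: "'t \<Rightarrow> real"
    and ast :: "'k \<Rightarrow> real"
  assumes lam_pos: "\<forall>i. 0 < lam i"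
    and Q1_rank: "full_col_rank Q1"
    and Q1_contrast: "transpose Q1 *v (1 :: real^'t) = 0"
    and Q1_nozero: "\<forall>i. row i Q1 \<noteq> 0"
    and K_rank: "full_col_rank K"
    and Phi_info: "information_function \<Phi>"
    and Phi_eig: "eigenvalue_based \<Phi>"
    and w_prob: "prob_vec wst"
    and a_prob: "prob_vec ast"
    and opt: "phi_optimal \<Phi> lam g (Amat Q1 K) (product_design wst ast)"
  shows
    "(\<forall>M2g \<xi>. gen_inverse (M2 g ast) M2g \<and> is_design \<xi> \<and>
        moment lam g \<xi> ** blockdiag (matrix_inv (M1 lam wst))
                            (inverse (\<Sum>i\<in>UNIV. lam i * wst i) *\<^sub>R M2g) ** Amat Q1 K
          = Amat Q1 K
      \<longrightarrow> phi_optimal \<Phi> lam g (Amat Q1 K) \<xi>)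
   \<and>
    (\<forall>Sg \<xi>. gen_inverse (Smat g ast) Sg \<and> is_design \<xi> \<and>
        (\<forall>i. (\<Sum>k\<in>UNIV. \<xi> i k) = wst i) \<and>
        (\<chi> l i. (1 / wst i) * (\<Sum>k\<in>UNIV. \<xi> i k * g k $ l)) ** Q1 = (0 :: real^'a^'v) \<and>
        (\<chi> i l. \<Sum>k\<in>UNIV. (\<xi> i k - wst i * ast k) * g k $ l) ** Sg ** K = (0 :: real^'b^'t) \<and>
        (inverse (\<Sum>i\<in>UNIV. lam i * wst i) *\<^sub>R
           ((\<Sum>i\<in>UNIV. \<Sum>k\<in>UNIV. (lam i * \<xi> i k) *\<^sub>R outer (g k) (g k))
            - outer (\<Sum>i\<in>UNIV. \<Sum>k\<in>UNIV. (lam i * \<xi> i k) *\<^sub>R g k)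
                    (\<Sum>k\<in>UNIV. ast k *\<^sub>R g k))) ** Sg ** K = K
      \<longrightarrow> phi_optimal \<Phi> lam g (Amat Q1 K) \<xi>)"
  using phi_optimal_of_moment_G_condition[OF lam_pos Q1_contrast Q1_nozero w_prob a_prob opt]
    phi_optimal_of_marginal_conditions[OF lam_pos Q1_contrast Q1_nozero w_prob a_prob opt]
  by blast

end
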